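(* Let $n \ge 1$ and let $N$ be a $\lambda$-term satisfying $N a_1 a_2 \ldots a_n =_\beta a_1 a_2 \ldots a_n (N a_1 a_2 \ldots a_n)$ (for variables $a_1,\ldots,a_n$ not free in $N$). Then $N\,I^{\,n-1}$ (i.e. $N$ applied to $n-1$ copies of $I$) is a fixed point combinator.
   Context: Untyped $\lambda$-calculus; $=_\beta$ is $\beta$-convertibility; $I = \lambda x.x$. A term $Y$ is a fixed point combinator if $Yx =_\beta x(Yx)$ for a variable $x$ not free in $Y$. $N\,I^{m}$ denotes the left-associated application $N I \cdots I$ with $m$ copies of $I$. *)

theory Defs
  imports Main
begin

text \<open>Untyped lambda terms in de Bruijn notation. Free variables are the loose
  indices; a free variable x is represented by the loose index x.\<close>

datatype lterm = Var nat | App lterm lterm | Abs lterm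

primrec lift :: "lterm \<Rightarrow> nat \<Rightarrow> lterm" where
  "lift (Var i) k = (if i < k then Var i else Var (i + 1))"
| "lift (App s t) k = App (lift s k) (lift t k)"
| "lift (Abs s) k = Abs (lift s (k + 1))"

primrec subst :: "lterm \<Rightarrow> nat \<Rightarrow> lterm \<Rightarrow> lterm" where
  "subst (Var i) k s = (if k < i then Var (i - 1) else if i = k then s else Var i)"
| "subst (App t u) k s = App (subst t k s) (subst u k s)"
| "subst (Abs t) k s = Abs (subst t (k + 1) (lift s 0))"

inductive beta :: "lterm \<Rightarrow> lterm \<Rightarrow> bool" where
  beta_redex: "beta (App (Abs s) t) (subst s 0 t)"
| beta_appL: "beta s t \<Longrightarrow> beta (App s u) (App t u)"
| beta_appR: "beta s t \<Longrightarrow> beta (App u s) (App u t)"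
| beta_abs: "beta s t \<Longrightarrow> beta (Abs s) (Abs t)"

definition beta_eq :: "lterm \<Rightarrow> lterm \<Rightarrow> bool" (infix "=\<^sub>\<beta>" 50) where
  "s =\<^sub>\<beta> t \<longleftrightarrow> equivclp beta s t"

primrec fv_at :: "nat \<Rightarrow> lterm \<Rightarrow> nat set" where
  "fv_at k (Var i) = (if i < k then {} else {i - k})"
| "fv_at k (App s t) = fv_at k s \<union> fv_at k t"
| "fv_at k (Abs s) = fv_at (k + 1) s"

definition fv :: "lterm \<Rightarrow> nat set" where
  "fv t = fv_at 0 t"

definition apps :: "lterm \<Rightarrow> lterm list \<Rightarrow> lterm" where
  "apps t us = foldl App t us"

definition I_comb :: lterm where
  "I_comb = Abs (Var 0)"

definition is_fpc :: "lterm \<Rightarrow> bool" where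
  "is_fpc Y \<longleftrightarrow> (\<forall>x. x \<notin> fv Y \<longrightarrow>
       App Y (Var x) =\<^sub>\<beta> App (Var x) (App Y (Var x)))"

end

theory Submission
  imports Defs
begin

text \<open>Substitute \<open>I\<close> for the first \<open>n - 1\<close> of the variables \<open>a\<^sub>1 \<dots> a\<^sub>n\<close> and an arbitrary
  variable \<open>x\<close> for \<open>a\<^sub>n\<close> in the hypothesis. Since the \<open>a\<^sub>i\<close> are not free in \<open>N\<close>, the left-hand side
  becomes \<open>N I\<^sup>n\<^sup>-\<^sup>1 x\<close>, while the head \<open>a\<^sub>1 a\<^sub>2 \<dots> a\<^sub>n\<close> becomes \<open>I I \<dots> I x\<close>, which reduces to \<open>x\<close>.
  Substitution respects beta convertibility, so \<open>N I\<^sup>n\<^sup>-\<^sup>1 x =\<^sub>\<beta> x (N I\<^sup>n\<^sup>-\<^sup>1 x)\<close>.\<close>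

lemma lift_lift: "i < k + 1 \<Longrightarrow> lift (lift t i) (Suc k) = lift (lift t k) i"
  by (induct t arbitrary: i k) auto

lemma lift_subst [simp]:
  "j < i + 1 \<Longrightarrow> lift (subst t j s) i = subst (lift t (i + 1)) j (lift s i)"
  by (induct t arbitrary: i j s) (simp_all add: diff_Suc lift_lift split: nat.split)

lemma lift_subst_lt:
  "i < j + 1 \<Longrightarrow> lift (subst t j s) i = subst (lift t i) (j + 1) (lift s i)"
  by (induct t arbitrary: i j s) (auto simp add: lift_lift)

lemma subst_lift [simp]: "subst (lift t k) k s = t"
  by (induct t arbitrary: k s) simp_all

lemma subst_subst:
  "i < j + 1 \<Longrightarrow>
    subst (subst t (Suc j) (lift v i)) i (subst u j v) = subst (subst t i u) j v"
  by (induct t arbitrary: i j u v)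
    (simp_all add: diff_Suc lift_lift [symmetric] lift_subst_lt split: nat.split)

lemma beta_lift: "beta r s \<Longrightarrow> beta (lift r i) (lift s i)"
proof (induct arbitrary: i rule: beta.induct)
  case (beta_redex s t)
  show ?case
    using beta.beta_redex [of "lift s (i + 1)" "lift t i"] by simp
qed (auto intro: beta.intros)

lemma beta_subst: "beta r s \<Longrightarrow> beta (subst r i t) (subst s i t)"
proof (induct arbitrary: t i rule: beta.induct)
  case (beta_redex s u)
  have "subst (subst s 0 u) i t = subst (subst s (Suc i) (lift t 0)) 0 (subst u i t)"
    using subst_subst [of 0 i s t u] by simp
  then show ?case
    using beta.beta_redex [of "subst s (Suc i) (lift t 0)" "subst u i t"] by simp
qed (auto intro: beta.intros)

lemma equivclp_map:
  assumes "\<And>a b. r a b \<Longrightarrow> r (f a) (f b)" and "equivclp r s t"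
  shows "equivclp r (f s) (f t)"
  using assms(2)
proof induct
  case base
  show ?case by (simp add: equivclp_def)
next
  case (step y z)
  then have "equivclp r (f y) (f z)"
    using assms(1) by (blast intro: r_into_equivclp equivclp_sym)
  with step.hyps(3) show ?case by (rule equivclp_trans)
qed

lemma beta_eq_map:
  "(\<And>s t. beta s t \<Longrightarrow> beta (f s) (f t)) \<Longrightarrow> s =\<^sub>\<beta> t \<Longrightarrow> f s =\<^sub>\<beta> f t"
  unfolding beta_eq_def by (rule equivclp_map)

lemma beta_eq_trans [trans]: "s =\<^sub>\<beta> t \<Longrightarrow> t =\<^sub>\<beta> u \<Longrightarrow> s =\<^sub>\<beta> u"
  unfolding beta_eq_def by (rule equivclp_trans)

lemma beta_eq_AppL: "s =\<^sub>\<beta> t \<Longrightarrow> App s u =\<^sub>\<beta> App t u"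
  by (rule beta_eq_map) (rule beta_appL)

lemma apps_snoc: "apps s (ts @ [t]) = App (apps s ts) t"
  by (simp add: apps_def)

lemma apps_hom:
  "(\<And>s t. f (App s t) = App (f s) (f t)) \<Longrightarrow> f (apps s ts) = apps (f s) (map f ts)"
  by (induct ts arbitrary: s rule: rev_induct) (simp_all add: apps_def)

lemma App_I_comb: "App I_comb t =\<^sub>\<beta> t"
  unfolding beta_eq_def I_comb_def
  using beta_redex [of "Var 0" t] by (auto intro: r_into_equivclp)

lemma apps_I_comb_replicate: "apps I_comb (replicate m I_comb) =\<^sub>\<beta> I_comb"
proof (induct m)
  case 0
  show ?case by (simp add: apps_def beta_eq_def)
next
  case (Suc m)
  have "apps I_comb (replicate (Suc m) I_comb) = App (apps I_comb (replicate m I_comb)) I_comb"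
    by (simp only: replicate_Suc replicate_append_same [symmetric] apps_snoc)
  also have "\<dots> =\<^sub>\<beta> App I_comb I_comb"
    using Suc by (rule beta_eq_AppL)
  also have "\<dots> =\<^sub>\<beta> I_comb"
    by (rule App_I_comb)
  finally show ?case .
qed

lemma apps_hd_tl_replicate_I_comb:
  "apps (hd (replicate m I_comb @ [t])) (tl (replicate m I_comb @ [t])) =\<^sub>\<beta> t"
proof (cases m)
  case 0
  then show ?thesis by (simp add: apps_def beta_eq_def)
next
  case (Suc k)
  then have "apps (hd (replicate m I_comb @ [t])) (tl (replicate m I_comb @ [t]))
      = App (apps I_comb (replicate k I_comb)) t"
    by (simp add: apps_snoc)
  also have "\<dots> =\<^sub>\<beta> App I_comb t"
    by (rule beta_eq_AppL [OF apps_I_comb_replicate])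
  also have "\<dots> =\<^sub>\<beta> t"
    by (rule App_I_comb)
  finally show ?thesis .
qed

text \<open>Replaces the free variable \<open>a\<close> by \<open>u\<close>: lifting at \<open>a + 1\<close> first compensates for
  \<open>subst\<close> decrementing the loose indices above \<open>a\<close>.\<close>
definition subst_var :: "lterm \<Rightarrow> nat \<Rightarrow> lterm \<Rightarrow> lterm" where
  "subst_var t a u = subst (lift t (a + 1)) a u"

lemma subst_var_App [simp]: "subst_var (App s t) a u = App (subst_var s a u) (subst_var t a u)"
  by (simp add: subst_var_def)

lemma subst_var_Var [simp]: "subst_var (Var b) a u = (if b = a then u else Var b)"
  by (simp add: subst_var_def)

lemma subst_var_fresh_at: "a \<notin> fv_at k t \<Longrightarrow> subst (lift t (a + k + 1)) (a + k) u = t"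
proof (induct t arbitrary: k u)
  case (Abs t)
  then show ?case
    using Abs(1) [of "Suc k" "lift u 0"] by simp
qed auto

lemma subst_var_fresh: "a \<notin> fv t \<Longrightarrow> subst_var t a u = t"
  using subst_var_fresh_at [of a 0 t u] by (simp add: fv_def subst_var_def)

lemma beta_eq_subst_var: "s =\<^sub>\<beta> t \<Longrightarrow> subst_var s a u =\<^sub>\<beta> subst_var t a u"
  unfolding subst_var_def by (rule beta_eq_map) (intro beta_subst beta_lift)

definition subst_vars :: "nat list \<Rightarrow> lterm \<Rightarrow> lterm \<Rightarrow> lterm" where
  "subst_vars bs u t = foldl (\<lambda>t b. subst_var t b u) t bs"

lemma subst_vars_App [simp]:
  "subst_vars bs u (App s t) = App (subst_vars bs u s) (subst_vars bs u t)"
  unfolding subst_vars_def by (induct bs arbitrary: s t) simp_all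

lemma subst_vars_fresh: "\<forall>b\<in>set bs. b \<notin> fv t \<Longrightarrow> subst_vars bs u t = t"
  unfolding subst_vars_def by (induct bs) (simp_all add: subst_var_fresh)

lemma subst_vars_Var:
  assumes "fv u = {}"
  shows "subst_vars bs u (Var b) = (if b \<in> set bs then u else Var b)"
proof (induct bs arbitrary: b)
  case (Cons b' bs)
  have "subst_vars bs u u = u"
    using assms by (simp add: subst_vars_fresh)
  with Cons show ?case
    by (simp add: subst_vars_def)
qed (simp add: subst_vars_def)

lemma beta_eq_subst_vars: "s =\<^sub>\<beta> t \<Longrightarrow> subst_vars bs u s =\<^sub>\<beta> subst_vars bs u t"
  unfolding subst_vars_def by (induct bs arbitrary: s t) (simp_all add: beta_eq_subst_var)

lemma fv_I_comb: "fv I_comb = {}"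
  by (simp add: fv_def I_comb_def)

lemma map_subst_var_subst_vars_snoc:
  assumes "distinct (bs @ [c])" and "fv u = {}"
  shows "map (\<lambda>b. subst_var (subst_vars bs u (Var b)) c v) (bs @ [c]) = replicate (length bs) u @ [v]"
proof -
  have "subst_var (subst_vars bs u (Var b)) c v = u" if "b \<in> set bs" for b
    using that assms(2) by (simp add: subst_vars_Var subst_var_fresh)
  then have "map (\<lambda>b. subst_var (subst_vars bs u (Var b)) c v) bs = replicate (length bs) u"
    by (simp add: map_replicate_const cong: map_cong)
  with assms show ?thesis
    by (simp add: subst_vars_Var)
qed

theorem proposition5p1:
  fixes N :: lterm and n :: nat and as :: "nat list"
  assumes "n \<ge> 1"
    and "length as = n" and "distinct as" and "\<forall>a\<in>set as. a \<notin> fv N"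
    and "apps N (map Var as) =\<^sub>\<beta> App (apps (Var (hd as)) (map Var (tl as))) (apps N (map Var as))"
  shows "is_fpc (apps N (replicate (n - 1) I_comb))"
  unfolding is_fpc_def
proof (intro allI impI)
  fix x
  let ?M = "apps N (replicate (n - 1) I_comb)"
  obtain bs c where as: "as = bs @ [c]"
    using assms(1,2) by (cases as rule: rev_cases) auto
  define R where "R t = subst_var (subst_vars bs I_comb t) c (Var x)" for t
  have R_App: "R (App s t) = App (R s) (R t)" for s t
    by (simp add: R_def)
  have R_as: "map (R \<circ> Var) as = replicate (n - 1) I_comb @ [Var x]"
    using assms(2,3) map_subst_var_subst_vars_snoc [of bs c I_comb "Var x"]
    by (simp add: R_def as fv_I_comb comp_def)
  have "R N = N"
    using assms(4) by (simp add: R_def as subst_vars_fresh subst_var_fresh)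
  with R_as have lhs: "R (apps N (map Var as)) = App ?M (Var x)"
    by (simp add: apps_hom [of R, OF R_App] apps_snoc)
  have "as \<noteq> []"
    using as by simp
  then have "R (apps (Var (hd as)) (map Var (tl as)))
      = apps (hd (map (R \<circ> Var) as)) (tl (map (R \<circ> Var) as))"
    by (simp add: apps_hom [of R, OF R_App] hd_map map_tl)
  then have head: "R (apps (Var (hd as)) (map Var (tl as))) =\<^sub>\<beta> Var x"
    using apps_hd_tl_replicate_I_comb by (simp only: R_as)
  have "R (apps N (map Var as)) =\<^sub>\<beta> R (App (apps (Var (hd as)) (map Var (tl as))) (apps N (map Var as)))"
    unfolding R_def by (intro beta_eq_subst_var beta_eq_subst_vars assms(5))
  with lhs head show "App ?M (Var x) =\<^sub>\<beta> App (Var x) (App ?M (Var x))"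
    by (metis R_App beta_eq_AppL beta_eq_trans)
qed

end
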